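(* Consider the algorithm, problem, and auxiliary sequence $\{u_k\}$ described in the context, and let the problem assumption and the random-sample assumption hold. Then for any $k\geq 0$, $$\mathbb{E}\left[\left({w}_{f,k}+e_{f,k}+\rho_k{w}_{F,k}+\rho_k{e}_{F,k}\right)^T(u_k-y_{k+1})\right]=0.$$
   Context: Setting: $N\ge1$, positive integers $n_1,\dots,n_N$ with $n=\sum_i n_i$, sets $X_i\subseteq\mathbb R^{n_i}$, $X=\prod_{i=1}^N X_i$; $\mathcal P_X,\mathcal P_{X_i}$ Euclidean projections. $\xi$ is a random vector with values in $\mathbb R^d$. $f:\mathbb R^n\times\mathbb R^d\to\mathbb R$, $F=(F_1,\dots,F_N):\mathbb R^n\times\mathbb R^d\to\mathbb R^n$; $f(x):=\mathbb E[f(x,\xi)]$, $F(x):=\mathbb E[F(x,\xi)]$. $\tilde\nabla f(x)$ is a subgradient of $f$ at $x$ and $\tilde\nabla f(x,\xi)$ a stochastic subgradient; subscript $i$ denotes the $i$-th block. $\mathbf U_\ell\in\mathbb R^{n\times n_\ell}$ with $[\mathbf U_1,\dots,\mathbf U_N]=\mathbf I_n$. Problem assumption: $F$ single-valued, continuous, monotone; $f$ real-valued convex; $X\subseteq\mathrm{int}(\mathrm{dom}(F)\cap\mathrm{dom}(f))$ nonempty, compact, convex (each $X_i$ closed convex). Algorithm: given $x_0,y_0\in X$, positive sequences $\{\gamma_k\},\{\rho_k\}$; for $k=0,1,\dots$: draw $i_k,\tilde i_k$ uniformly from $\{1,\dots,N\}$ and realizations $\xi_k,\tilde\xi_k$ of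 $\xi$; $y_{k+1}^{(i)}=\mathcal P_{X_i}\big(x_k^{(i)}-\gamma_k(\tilde\nabla_i f(x_k,\tilde\xi_k)+\rho_kF_i(x_k,\tilde\xi_k))\big)$ if $i=\tilde i_k$, else $x_k^{(i)}$; $x_{k+1}^{(i)}=\mathcal P_{X_i}\big(x_k^{(i)}-\gamma_k(\tilde\nabla_i f(y_{k+1},\xi_k)+\rho_kF_i(y_{k+1},\xi_k))\big)$ if $i=i_k$, else $x_k^{(i)}$. Errors: $w_{F,k}=F(y_{k+1},\xi_k)-F(y_{k+1})$, $w_{f,k}=\tilde\nabla f(y_{k+1},\xi_k)-\tilde\nabla f(y_{k+1})$, $e_{F,k}=N\mathbf U_{i_k}F_{i_k}(y_{k+1},\xi_k)-F(y_{k+1},\xi_k)$, $e_{f,k}=N\mathbf U_{i_k}\tilde\nabla_{i_k}f(y_{k+1},\xi_k)-\tilde\nabla f(y_{k+1},\xi_k)$. Auxiliary sequence: $u_0=x_0$, $u_{k+1}=\mathcal P_X\big(u_k+N^{-1}\gamma_k(w_{f,k}+e_{f,k}+\rho_kw_{F,k}+\rho_ke_{F,k})\big)$. Random-sample assumption: (a) the $\tilde\xi_k,\xi_k$ are i.i.d. copies of $\xi$, the $\tilde i_k,i_k$ i.i.d. uniform on $\{1,\dots,N\}$, all mutually independent; (b) $F(\cdot,\tilde\xi_k)$, $F(\cdot,\xi_k)$ unbiased for $F(\cdot)$ and $\tilde\nabla f(\cdot,\tilde\xi_k)$, $\tilde\nabla f(\cdot,\xi_k)$ unbiased for $\tilde\nabla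 f(\cdot)$; (c) there exist $\nu_F,\nu_f>0$ with $\mathbb E[\|F(x,\xi)-F(x)\|^2\mid x]\le\nu_F^2$, $\mathbb E[\|\tilde\nabla f(x,\xi)-\tilde\nabla f(x)\|^2\mid x]\le\nu_f^2$. *)

theory Defs
  imports "HOL-Probability.Probability"
begin

text \<open>Block structure of R^n: the coordinates (index type 'n) are partitioned into
  N blocks via blk; blocks are numbered 0..N-1 (paper: 1..N).\<close>

definition blockpart :: "('n \<Rightarrow> nat) \<Rightarrow> nat \<Rightarrow> real^'n \<Rightarrow> real^'n" where
  "blockpart blk i x = (\<chi> j. if blk j = i then x $ j else 0)"

definition block_subspace :: "('n \<Rightarrow> nat) \<Rightarrow> nat \<Rightarrow> (real^'n) set" where
  "block_subspace blk i = {v. \<forall>j. blk j \<noteq> i \<longrightarrow> v $ j = 0}"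

definition prod_set :: "('n \<Rightarrow> nat) \<Rightarrow> nat \<Rightarrow> (nat \<Rightarrow> (real^'n) set) \<Rightarrow> (real^'n) set" where
  "prod_set blk N Xb = {x. \<forall>i<N. blockpart blk i x \<in> Xb i}"
  \<comment> \<open>X = X_1 x ... x X_N, with X_i represented inside the i-th block subspace\<close>

definition block_update ::
  "('n \<Rightarrow> nat) \<Rightarrow> (nat \<Rightarrow> (real^'n) set) \<Rightarrow> nat \<Rightarrow> real \<Rightarrow> real^'n \<Rightarrow> real^'n \<Rightarrow> real^'n" where
  "block_update blk Xb i \<gamma> x v =
     (\<chi> j. if blk j = i then closest_point (Xb i) (blockpart blk i (x - \<gamma> *\<^sub>R v)) $ j else x $ j)"

definition is_subgradient :: "(real^'n \<Rightarrow> real) \<Rightarrow> real^'n \<Rightarrow> real^'n \<Rightarrow> bool" where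
  "is_subgradient f x s \<longleftrightarrow> (\<forall>y. f y \<ge> f x + s \<bullet> (y - x))"

text \<open>Iterates (x_k, y_k) of the algorithm, as functions of the sample point omega.
  Phi k z xi = stochastic subgradient + rho_k * F(z,xi).\<close>

primrec alg_iter ::
  "('n \<Rightarrow> nat) \<Rightarrow> (nat \<Rightarrow> (real^'n) set) \<Rightarrow> (nat \<Rightarrow> real) \<Rightarrow>
   (nat \<Rightarrow> real^'n \<Rightarrow> 'd \<Rightarrow> real^'n) \<Rightarrow> real^'n \<Rightarrow> real^'n \<Rightarrow>
   (nat \<Rightarrow> 'a \<Rightarrow> nat) \<Rightarrow> (nat \<Rightarrow> 'a \<Rightarrow> 'd) \<Rightarrow> (nat \<Rightarrow> 'a \<Rightarrow> nat) \<Rightarrow> (nat \<Rightarrow> 'a \<Rightarrow> 'd) \<Rightarrow>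
   nat \<Rightarrow> 'a \<Rightarrow> (real^'n) \<times> (real^'n)" where
  "alg_iter blk Xb \<gamma> Phi x0 y0 it xit ii xi 0 \<omega> = (x0, y0)"
| "alg_iter blk Xb \<gamma> Phi x0 y0 it xit ii xi (Suc k) \<omega> =
     (let x = fst (alg_iter blk Xb \<gamma> Phi x0 y0 it xit ii xi k \<omega>);
          y' = block_update blk Xb (it k \<omega>) (\<gamma> k) x (Phi k x (xit k \<omega>));
          x' = block_update blk Xb (ii k \<omega>) (\<gamma> k) x (Phi k y' (xi k \<omega>))
      in (x', y'))"

primrec aux_seq :: "(real^'n) set \<Rightarrow> nat \<Rightarrow> (nat \<Rightarrow> real) \<Rightarrow> real^'n \<Rightarrow>
   (nat \<Rightarrow> 'a \<Rightarrow> real^'n) \<Rightarrow> nat \<Rightarrow> 'a \<Rightarrow> real^'n" where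
  "aux_seq X N \<gamma> x0 err 0 \<omega> = x0"
| "aux_seq X N \<gamma> x0 err (Suc k) \<omega> =
     closest_point X (aux_seq X N \<gamma> x0 err k \<omega> + (\<gamma> k / real N) *\<^sub>R err k \<omega>)"

definition rv_events :: "'a measure \<Rightarrow> 'b measure \<Rightarrow> ('a \<Rightarrow> 'b) \<Rightarrow> 'a set set" where
  "rv_events M N X = {X -` A \<inter> space M | A. A \<in> sets N}"

datatype sample_tag = Tilde_Index | Tilde_Sample | Index | Sample

end

theory Submission
  imports Defs
begin

(* With Phi = g + rho_k F the error term is
     w_{f,k} + e_{f,k} + rho_k (w_{F,k} + e_{F,k}) = N U_{i_k} Phi_{i_k}(y_{k+1}, xi_k) - E[Phi](y_{k+1}).
   The pair (y_{k+1}, u_k) is a function of the samples drawn before (i_k, xi_k), hence independent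
   of them.  Averaging the error over xi_k and the uniform block index i_k gives
   sum_i U_i E[Phi]_i(y) - E[Phi](y) = 0, so Fubini makes the expectation vanish.  Integrability
   holds because y_{k+1} and u_k stay in the compact set X, and the variance bounds together with
   boundedness of subgradients and of E[F] on X bound E||Phi(z, xi)|| uniformly for z in X. *)

lemma linear_blockpart: "linear (blockpart blk i)"
  by (rule linearI) (auto simp: blockpart_def vec_eq_iff)

lemma bounded_linear_blockpart: "bounded_linear (blockpart blk i)"
  using linear_blockpart linear_conv_bounded_linear by blast

lemma continuous_on_blockpart: "continuous_on S (blockpart blk i)"
  by (rule linear_continuous_on[OF bounded_linear_blockpart])

lemma norm_blockpart_le: "norm (blockpart blk i v) \<le> norm v"
  by (rule norm_le_componentwise_cart) (simp add: blockpart_def)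

lemma sum_blockpart:
  assumes "\<forall>j. blk j < N"
  shows "(\<Sum>i<N. blockpart blk i v) = v"
  using assms by (simp add: vec_eq_iff sum_component blockpart_def)

lemma sum_scaled_blockpart_diff:
  assumes "\<forall>j. blk j < N"
  shows "(\<Sum>i<N. real N *\<^sub>R blockpart blk i v - v) = 0"
  by (simp add: sum_subtractf sum_constant_scaleR scaleR_sum_right[symmetric] sum_blockpart[OF assms]
      del: sum_constant)

lemma continuous_on_block_update:
  assumes "convex (Xb i)" "closed (Xb i)" "Xb i \<noteq> {}"
  shows "continuous_on UNIV (\<lambda>p. block_update blk Xb i c (fst p) (snd p))"
  unfolding block_update_def
proof (intro continuous_on_vec_lambda)
  fix j
  have "continuous_on UNIV
      (\<lambda>p. closest_point (Xb i) (blockpart blk i (fst p - c *\<^sub>R snd p)))"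
    by (intro continuous_on_compose2[OF continuous_on_closest_point[OF assms]]
        continuous_on_compose2[OF continuous_on_blockpart] continuous_intros) auto
  then show "continuous_on UNIV (\<lambda>p.
      if blk j = i then closest_point (Xb i) (blockpart blk i (fst p - c *\<^sub>R snd p)) $ j else fst p $ j)"
    by (cases "blk j = i") (simp_all add: continuous_on_component continuous_on_fst)
qed

lemma block_update_in_prod_set:
  assumes x: "x \<in> prod_set blk N Xb" and i: "i < N"
    and Xb: "Xb i \<subseteq> block_subspace blk i" "closed (Xb i)" "Xb i \<noteq> {}"
  shows "block_update blk Xb i c x v \<in> prod_set blk N Xb"
proof -
  define p where "p = closest_point (Xb i) (blockpart blk i (x - c *\<^sub>R v))"
  have p: "p \<in> Xb i"
    unfolding p_def using closest_point_in_set[OF Xb(2,3)] .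
  then have p_block: "blk j \<noteq> i \<Longrightarrow> p $ j = 0" for j
    using Xb(1) by (auto simp: block_subspace_def)
  have update: "block_update blk Xb i c x v = (\<chi> j. if blk j = i then p $ j else x $ j)"
    unfolding block_update_def p_def ..
  have "blockpart blk i' (block_update blk Xb i c x v) = (if i' = i then p else blockpart blk i' x)" for i'
    using p_block by (auto simp: update blockpart_def vec_eq_iff)
  then show ?thesis
    using x p by (simp add: prod_set_def)
qed

lemma alg_iter_in_prod_set:
  assumes x0: "x0 \<in> prod_set blk N Xb" and y0: "y0 \<in> prod_set blk N Xb"
    and Xb: "\<forall>i<N. Xb i \<subseteq> block_subspace blk i \<and> closed (Xb i) \<and> Xb i \<noteq> {}"
    and idx: "\<forall>j. it j \<omega> < N \<and> ii j \<omega> < N"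
  shows "fst (alg_iter blk Xb \<gamma> Phi x0 y0 it xit ii xi k \<omega>) \<in> prod_set blk N Xb \<and>
         snd (alg_iter blk Xb \<gamma> Phi x0 y0 it xit ii xi k \<omega>) \<in> prod_set blk N Xb"
proof (induction k)
  case 0
  then show ?case using x0 y0 by simp
next
  case (Suc k)
  then have "fst (alg_iter blk Xb \<gamma> Phi x0 y0 it xit ii xi k \<omega>) \<in> prod_set blk N Xb"
    by blast
  then show ?case
    using Xb idx by (simp add: Let_def block_update_in_prod_set)
qed

lemma measurable_uniform_count_measure_eq:
  "measurable L (uniform_count_measure A) = measurable L (count_space A)"
  by (rule measurable_cong_sets) (simp_all add: sets_uniform_count_measure)

lemma measurable_Pair_compose:
  assumes "(\<lambda>p. G (fst p) (snd p)) \<in> borel_measurable (borel \<Otimes>\<^sub>M D)"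
    and "x \<in> borel_measurable L" and "\<xi> \<in> measurable L D"
  shows "(\<lambda>\<omega>. G (x \<omega>) (\<xi> \<omega>)) \<in> borel_measurable L"
  using measurable_compose[OF measurable_Pair[OF assms(2,3)] assms(1)] by simp

lemma borel_measurable_block_update:
  assumes x: "x \<in> borel_measurable L" and v: "v \<in> borel_measurable L"
    and idx: "idx \<in> measurable L (uniform_count_measure {..<N})"
    and Xb: "\<forall>i<N. convex (Xb i) \<and> closed (Xb i) \<and> Xb i \<noteq> {}"
  shows "(\<lambda>\<omega>. block_update blk Xb (idx \<omega>) c (x \<omega>) (v \<omega>)) \<in> borel_measurable L"
proof (rule measurable_compose_countable'[where I="{..<N}" and g=idx])
  show "idx \<in> measurable L (count_space {..<N})"
    using idx by (simp add: measurable_uniform_count_measure_eq)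
  fix i assume "i \<in> {..<N}"
  then show "(\<lambda>\<omega>. block_update blk Xb i c (x \<omega>) (v \<omega>)) \<in> borel_measurable L"
    using Xb by (intro borel_measurable_continuous_Pair[OF x v continuous_on_block_update]) auto
qed auto

lemma borel_measurable_alg_iter_fst:
  assumes "\<forall>j<k. it j \<in> measurable L (uniform_count_measure {..<N}) \<and> xit j \<in> measurable L D"
    and "\<forall>j<k. ii j \<in> measurable L (uniform_count_measure {..<N}) \<and> xi j \<in> measurable L D"
    and Xb: "\<forall>i<N. convex (Xb i) \<and> closed (Xb i) \<and> Xb i \<noteq> {}"
    and Phi: "\<forall>j. (\<lambda>p. Phi j (fst p) (snd p)) \<in> borel_measurable (borel \<Otimes>\<^sub>M D)"
  shows "(\<lambda>\<omega>. fst (alg_iter blk Xb \<gamma> Phi x0 y0 it xit ii xi k \<omega>)) \<in> borel_measurable L"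
  using assms(1,2)
proof (induction k)
  case 0
  then show ?case by simp
next
  case (Suc k)
  then have x: "(\<lambda>\<omega>. fst (alg_iter blk Xb \<gamma> Phi x0 y0 it xit ii xi k \<omega>)) \<in> borel_measurable L"
    by simp
  have y: "(\<lambda>\<omega>. block_update blk Xb (it k \<omega>) (\<gamma> k) (fst (alg_iter blk Xb \<gamma> Phi x0 y0 it xit ii xi k \<omega>))
      (Phi k (fst (alg_iter blk Xb \<gamma> Phi x0 y0 it xit ii xi k \<omega>)) (xit k \<omega>))) \<in> borel_measurable L"
    using Suc.prems Xb Phi by (intro borel_measurable_block_update[OF x] measurable_Pair_compose[OF _ x]) auto
  show ?case
    using Suc.prems Xb Phi
    by (simp add: Let_def) (intro borel_measurable_block_update[OF x] measurable_Pair_compose[OF _ y]; auto)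
qed

lemma borel_measurable_alg_iter_snd:
  assumes "\<forall>j\<le>k. it j \<in> measurable L (uniform_count_measure {..<N}) \<and> xit j \<in> measurable L D"
    and "\<forall>j<k. ii j \<in> measurable L (uniform_count_measure {..<N}) \<and> xi j \<in> measurable L D"
    and Xb: "\<forall>i<N. convex (Xb i) \<and> closed (Xb i) \<and> Xb i \<noteq> {}"
    and Phi: "\<forall>j. (\<lambda>p. Phi j (fst p) (snd p)) \<in> borel_measurable (borel \<Otimes>\<^sub>M D)"
  shows "(\<lambda>\<omega>. snd (alg_iter blk Xb \<gamma> Phi x0 y0 it xit ii xi (Suc k) \<omega>)) \<in> borel_measurable L"
proof -
  have x: "(\<lambda>\<omega>. fst (alg_iter blk Xb \<gamma> Phi x0 y0 it xit ii xi k \<omega>)) \<in> borel_measurable L"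
    using assms by (intro borel_measurable_alg_iter_fst) auto
  show ?thesis
    using assms
    by (simp add: Let_def) (intro borel_measurable_block_update[OF x] measurable_Pair_compose[OF _ x]; auto)
qed

lemma borel_measurable_aux_seq:
  assumes "\<forall>j<k. err j \<in> borel_measurable L"
    and X: "convex X" "closed X" "X \<noteq> {}"
  shows "aux_seq X N \<gamma> x0 err k \<in> borel_measurable L"
  using assms(1)
proof (induction k)
  case 0
  then show ?case by simp
next
  case (Suc k)
  then have "aux_seq X N \<gamma> x0 err k \<in> borel_measurable L" "err k \<in> borel_measurable L"
    by simp_all
  then show ?case
    by (simp add: measurable_compose[OF _ borel_measurable_continuous_onI[OF continuous_on_closest_point[OF X]]])
qed

lemma aux_seq_in_set:
  assumes "x0 \<in> X" "closed X" "X \<noteq> {}"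
  shows "aux_seq X N \<gamma> x0 err k \<omega> \<in> X"
  using assms by (cases k) (auto intro: closest_point_in_set)

(* For h = g + rho_k F this is w_{f,k} + e_{f,k} + rho_k (w_{F,k} + e_{F,k}) of the paper. *)
definition block_sampling_error ::
  "nat \<Rightarrow> ('n \<Rightarrow> nat) \<Rightarrow> (real^'n \<Rightarrow> 'd \<Rightarrow> real^'n) \<Rightarrow> (real^'n \<Rightarrow> real^'n) \<Rightarrow>
   real^'n \<Rightarrow> nat \<Rightarrow> 'd \<Rightarrow> real^'n" where
  "block_sampling_error N blk h hbar z i \<xi> = real N *\<^sub>R blockpart blk i (h z \<xi>) - hbar z"

lemma borel_measurable_block_sampling_error:
  assumes h: "(\<lambda>p. h (fst p) (snd p)) \<in> borel_measurable (borel \<Otimes>\<^sub>M D)"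
    and hbar: "hbar \<in> borel_measurable borel"
    and Y: "Y \<in> borel_measurable L" and \<xi>: "\<xi> \<in> measurable L D"
    and idx: "idx \<in> measurable L (uniform_count_measure {..<N})"
  shows "(\<lambda>\<omega>. block_sampling_error N blk h hbar (Y \<omega>) (idx \<omega>) (\<xi> \<omega>)) \<in> borel_measurable L"
proof (rule measurable_compose_countable'[where I="{..<N}" and g=idx])
  show "idx \<in> measurable L (count_space {..<N})"
    using idx by (simp add: measurable_uniform_count_measure_eq)
  fix i
  show "(\<lambda>\<omega>. block_sampling_error N blk h hbar (Y \<omega>) i (\<xi> \<omega>)) \<in> borel_measurable L"
    unfolding block_sampling_error_def
    by (intro borel_measurable_diff borel_measurable_scaleR borel_measurable_const
        measurable_compose[OF measurable_Pair_compose[OF h Y \<xi>]] measurable_compose[OF Y hbar]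
        borel_measurable_continuous_onI[OF continuous_on_blockpart])
qed auto

lemma norm_block_sampling_error_le:
  "norm (block_sampling_error N blk h hbar z i \<xi>) \<le> real N * norm (h z \<xi>) + norm (hbar z)"
proof -
  have "norm (block_sampling_error N blk h hbar z i \<xi>) \<le> real N * norm (blockpart blk i (h z \<xi>)) + norm (hbar z)"
    unfolding block_sampling_error_def
    using norm_triangle_ineq4[of "real N *\<^sub>R blockpart blk i (h z \<xi>)" "hbar z"] by simp
  also have "\<dots> \<le> real N * norm (h z \<xi>) + norm (hbar z)"
    by (simp add: mult_left_mono norm_blockpart_le)
  finally show ?thesis .
qed

lemma
  assumes D: "prob_space D" and h: "integrable D (h z)" and hbar: "(\<integral>\<xi>. h z \<xi> \<partial>D) = hbar z"
  shows integrable_block_sampling_error: "integrable D (block_sampling_error N blk h hbar z i)"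
    and integral_block_sampling_error:
      "(\<integral>\<xi>. block_sampling_error N blk h hbar z i \<xi> \<partial>D) = real N *\<^sub>R blockpart blk i (hbar z) - hbar z"
proof -
  interpret prob_space D by (rule D)
  have "integrable D (\<lambda>\<xi>. blockpart blk i (h z \<xi>))"
    by (rule integrable_bounded_linear[OF bounded_linear_blockpart h])
  moreover have "(\<integral>\<xi>. blockpart blk i (h z \<xi>) \<partial>D) = blockpart blk i (hbar z)"
    using integral_bounded_linear[OF bounded_linear_blockpart h] hbar by simp
  ultimately show "integrable D (block_sampling_error N blk h hbar z i)"
    and "(\<integral>\<xi>. block_sampling_error N blk h hbar z i \<xi> \<partial>D) = real N *\<^sub>R blockpart blk i (hbar z) - hbar z"
    unfolding block_sampling_error_def[abs_def] by (simp_all add: prob_space)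
qed

lemma integral_norm_inner_block_sampling_error_le:
  assumes D: "prob_space D" and h: "integrable D (h z)" and hbar: "(\<integral>\<xi>. h z \<xi> \<partial>D) = hbar z"
    and N: "N > 0"
  shows "(\<integral>\<xi>. norm (block_sampling_error N blk h hbar z i \<xi> \<bullet> c) \<partial>D)
    \<le> real N * ((\<integral>\<xi>. norm (h z \<xi>) \<partial>D) + norm (hbar z)) * norm c"
proof -
  interpret prob_space D by (rule D)
  have "norm (block_sampling_error N blk h hbar z i \<xi> \<bullet> c) \<le> real N * (norm (h z \<xi>) + norm (hbar z)) * norm c"
    for \<xi>
  proof -
    have "norm (block_sampling_error N blk h hbar z i \<xi> \<bullet> c) \<le> norm (block_sampling_error N blk h hbar z i \<xi>) * norm c"
      by (simp add: Cauchy_Schwarz_ineq2)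
    also have "\<dots> \<le> (real N * norm (h z \<xi>) + norm (hbar z)) * norm c"
      by (intro mult_right_mono norm_block_sampling_error_le norm_ge_zero)
    also have "\<dots> \<le> real N * (norm (h z \<xi>) + norm (hbar z)) * norm c"
      using N mult_right_mono[of 1 "real N" "norm (hbar z)"] by (intro mult_right_mono) (simp_all add: distrib_left)
    finally show ?thesis .
  qed
  then have "(\<integral>\<xi>. norm (block_sampling_error N blk h hbar z i \<xi> \<bullet> c) \<partial>D)
      \<le> (\<integral>\<xi>. real N * (norm (h z \<xi>) + norm (hbar z)) * norm c \<partial>D)"
    using integrable_block_sampling_error[where h=h and hbar=hbar and z=z, OF D h hbar] h
    by (intro integral_mono) auto
  also have "\<dots> = real N * ((\<integral>\<xi>. norm (h z \<xi>) \<partial>D) + norm (hbar z)) * norm c"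
    using h by (simp add: prob_space)
  finally show ?thesis .
qed

lemma Int_stable_rv_events: "Int_stable (rv_events M S f)"
  unfolding Int_stable_def rv_events_def
  by clarify (rule_tac x="A \<inter> Aa" in exI, auto)

lemma measurable_sigma_rv_events:
  assumes "f \<in> measurable M S" and "rv_events M S f \<subseteq> G" and "G \<subseteq> Pow (space M)"
  shows "f \<in> measurable (sigma (space M) G) S"
  using assms unfolding measurable_def rv_events_def
  by (auto simp: sets_measure_of intro!: sigma_sets.Basic)

lemma (in prob_space) indep_sets_distr_Pair:
  assumes indep: "indep_sets E UNIV" and stable: "\<And>i. Int_stable (E i)"
    and disj: "I \<inter> J = {}"
    and X: "X \<in> measurable (sigma (space M) (\<Union>i\<in>I. E i)) S"
    and Y: "Y \<in> measurable (sigma (space M) (\<Union>i\<in>J. E i)) T"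
  shows "random_variable S X" "random_variable T Y"
    and "distr M (S \<Otimes>\<^sub>M T) (\<lambda>x. (X x, Y x)) = distr M S X \<Otimes>\<^sub>M distr M T Y"
proof -
  have E: "E i \<subseteq> events" for i
    using indep by (auto simp: indep_sets_def)
  define G where "G K = sigma_sets (space M) (\<Union>i\<in>K. E i)" for K
  have "(\<Union>i\<in>K. E i) \<subseteq> Pow (space M)" for K
    using E sets.sets_into_space by blast
  then have sets_G: "sets (sigma (space M) (\<Union>i\<in>K. E i)) = G K" "space (sigma (space M) (\<Union>i\<in>K. E i)) = space M"
    for K
    by (simp_all add: G_def sets_measure_of space_measure_of_conv)
  have G_events: "G K \<subseteq> events" for K
    using E unfolding G_def by (intro sets.sigma_sets_subset) auto
  have "indep_sets (\<lambda>b. G (case_bool I J b)) UNIV"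
    unfolding G_def
  proof (rule indep_sets_collect_sigma[OF indep_sets_mono_index[OF _ indep] stable])
    show "disjoint_family_on (case_bool I J) UNIV"
      using disj by (auto simp: disjoint_family_on_def split: bool.split)
  qed simp
  then have indep_GIJ: "indep_set (G I) (G J)"
    unfolding indep_set_def by (simp add: case_bool_if if_distrib)
  show X_rv: "random_variable S X" and Y_rv: "random_variable T Y"
    using X Y G_events unfolding measurable_def sets_G by blast+
  interpret PX: prob_space "distr M S X" by (rule prob_space_distr[OF X_rv])
  interpret PY: prob_space "distr M T Y" by (rule prob_space_distr[OF Y_rv])
  show "distr M (S \<Otimes>\<^sub>M T) (\<lambda>x. (X x, Y x)) = distr M S X \<Otimes>\<^sub>M distr M T Y"
  proof (rule pair_measure_eqI[symmetric])
    fix A B assume A: "A \<in> sets (distr M S X)" and B: "B \<in> sets (distr M T Y)"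
    have "X -` A \<inter> space M \<in> G I" "Y -` B \<inter> space M \<in> G J"
      using A B X Y unfolding measurable_def sets_G by auto
    then have "prob ((X -` A \<inter> space M) \<inter> (Y -` B \<inter> space M)) = prob (X -` A \<inter> space M) * prob (Y -` B \<inter> space M)"
      by (rule indep_setD[OF indep_GIJ])
    moreover have "(\<lambda>x. (X x, Y x)) -` (A \<times> B) \<inter> space M = (X -` A \<inter> space M) \<inter> (Y -` B \<inter> space M)"
      by auto
    ultimately show "emeasure (distr M S X) A * emeasure (distr M T Y) B
        = emeasure (distr M (S \<Otimes>\<^sub>M T) (\<lambda>x. (X x, Y x))) (A \<times> B)"
      using A B X_rv Y_rv
      by (simp add: emeasure_distr measurable_Pair emeasure_eq_measure measure_nonneg ennreal_mult)
  qed (simp_all add: PX.sigma_finite_measure_axioms PY.sigma_finite_measure_axioms)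
qed

lemma
  fixes f :: "'i \<times> 'd \<Rightarrow> real"
  assumes A: "finite A" "A \<noteq> {}" and D: "prob_space D"
    and f: "\<And>i. i \<in> A \<Longrightarrow> integrable D (\<lambda>\<xi>. f (i, \<xi>))"
  shows integrable_uniform_count_pair: "integrable (uniform_count_measure A \<Otimes>\<^sub>M D) f"
    and integral_uniform_count_pair:
      "(\<integral>p. f p \<partial>(uniform_count_measure A \<Otimes>\<^sub>M D)) = (\<Sum>i\<in>A. \<integral>\<xi>. f (i, \<xi>) \<partial>D) / card A"
proof -
  interpret U: prob_space "uniform_count_measure A"
    using A by (rule prob_space_uniform_count_measure)
  interpret D: prob_space D by (rule D)
  interpret pair_sigma_finite "uniform_count_measure A" D ..
  have "f \<in> borel_measurable (count_space A \<Otimes>\<^sub>M D)"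
    using A f by (intro measurable_pair_measure_countable1 countable_finite) auto
  then have f_meas: "f \<in> borel_measurable (uniform_count_measure A \<Otimes>\<^sub>M D)"
    by (simp add: measurable_cong_sets[OF sets_pair_measure_cong[OF sets_uniform_count_measure_count_space refl] refl])
  show int: "integrable (uniform_count_measure A \<Otimes>\<^sub>M D) f"
  proof (rule Fubini_integrable[OF f_meas])
    show "integrable (uniform_count_measure A) (\<lambda>i. \<integral>\<xi>. norm (f (i, \<xi>)) \<partial>D)"
      unfolding uniform_count_measure_def point_measure_def
      using A by (subst integrable_density) (auto intro: integrable_count_space)
  qed (intro AE_I2, simp add: f space_uniform_count_measure)
  show "(\<integral>p. f p \<partial>(uniform_count_measure A \<Otimes>\<^sub>M D)) = (\<Sum>i\<in>A. \<integral>\<xi>. f (i, \<xi>) \<partial>D) / card A"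
    using integral_fst'[OF int] A by (simp add: integral_uniform_count_measure)
qed

lemma (in prob_space) integral_indep_eq_zero:
  fixes H :: "'s \<times> 't \<Rightarrow> real"
  assumes Z: "random_variable S Z" and W: "random_variable Q W" and Q: "prob_space Q"
    and joint: "distr M (S \<Otimes>\<^sub>M Q) (\<lambda>\<omega>. (Z \<omega>, W \<omega>)) = distr M S Z \<Otimes>\<^sub>M Q"
    and H: "H \<in> borel_measurable (S \<Otimes>\<^sub>M Q)" and int: "integrable M (\<lambda>\<omega>. H (Z \<omega>, W \<omega>))"
    and zero: "\<And>z. z \<in> space S \<Longrightarrow> (\<integral>w. H (z, w) \<partial>Q) = 0"
  shows "(\<integral>\<omega>. H (Z \<omega>, W \<omega>) \<partial>M) = 0"
proof -
  interpret PZ: prob_space "distr M S Z" by (rule prob_space_distr[OF Z])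
  interpret Q: prob_space Q by (rule Q)
  interpret pair_sigma_finite "distr M S Z" Q ..
  have ZW: "(\<lambda>\<omega>. (Z \<omega>, W \<omega>)) \<in> measurable M (S \<Otimes>\<^sub>M Q)"
    using Z W by (rule measurable_Pair)
  have int_pair: "integrable (distr M S Z \<Otimes>\<^sub>M Q) H"
    using integrable_distr_eq[OF ZW H] int joint by simp
  have "(\<integral>\<omega>. H (Z \<omega>, W \<omega>) \<partial>M) = (\<integral>p. H p \<partial>(distr M S Z \<Otimes>\<^sub>M Q))"
    using integral_distr[OF ZW H] joint by simp
  also have "\<dots> = (\<integral>z. (\<integral>w. H (z, w) \<partial>Q) \<partial>distr M S Z)"
    by (rule integral_fst'[OF int_pair, symmetric])
  also have "\<dots> = 0"
  proof (rule integral_eq_zero_AE)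
    show "AE z in distr M S Z. (\<integral>w. H (z, w) \<partial>Q) = 0"
      using zero by (intro AE_I2) simp
  qed
  finally show ?thesis .
qed

lemma (in prob_space) integrable_indep_section_bound:
  fixes H :: "'s \<times> 't \<Rightarrow> real"
  assumes Z: "random_variable S Z" and W: "random_variable Q W" and Q: "prob_space Q"
    and joint: "distr M (S \<Otimes>\<^sub>M Q) (\<lambda>\<omega>. (Z \<omega>, W \<omega>)) = distr M S Z \<Otimes>\<^sub>M Q"
    and H: "H \<in> borel_measurable (S \<Otimes>\<^sub>M Q)"
    and A: "A \<in> sets S" "\<And>\<omega>. \<omega> \<in> space M \<Longrightarrow> Z \<omega> \<in> A"
    and sections: "\<And>z. z \<in> A \<Longrightarrow> integrable Q (\<lambda>w. H (z, w))"
    and bound: "\<And>z. z \<in> A \<Longrightarrow> (\<integral>w. norm (H (z, w)) \<partial>Q) \<le> C"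
  shows "integrable M (\<lambda>\<omega>. H (Z \<omega>, W \<omega>))"
proof -
  interpret PZ: prob_space "distr M S Z" by (rule prob_space_distr[OF Z])
  interpret Q: prob_space Q by (rule Q)
  interpret pair_sigma_finite "distr M S Z" Q ..
  have ZW: "(\<lambda>\<omega>. (Z \<omega>, W \<omega>)) \<in> measurable M (S \<Otimes>\<^sub>M Q)"
    using Z W by (rule measurable_Pair)
  have H': "H \<in> borel_measurable (distr M S Z \<Otimes>\<^sub>M Q)"
    using H by (simp add: measurable_cong_sets[OF sets_pair_measure_cong[OF sets_distr refl] refl])
  have AE_A: "AE z in distr M S Z. z \<in> A"
    using A Z by (subst AE_distr_iff) (auto intro!: AE_I2)
  have "integrable (distr M S Z \<Otimes>\<^sub>M Q) H"
  proof (rule Fubini_integrable[OF H'])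
    show "integrable (distr M S Z) (\<lambda>z. \<integral>w. norm (H (z, w)) \<partial>Q)"
    proof (rule PZ.integrable_const_bound[where B=C])
      show "AE z in distr M S Z. norm (\<integral>w. norm (H (z, w)) \<partial>Q) \<le> C"
        using AE_A
      proof eventually_elim
        case (elim z)
        then show ?case using bound[of z] by simp
      qed
    qed (rule Q.borel_measurable_lebesgue_integral, use H' in simp)
    show "AE z in distr M S Z. integrable Q (\<lambda>w. H (z, w))"
      using AE_A by eventually_elim (rule sections)
  qed
  then show ?thesis
    using integrable_distr_eq[OF ZW H] joint by simp
qed

lemma bounded_subgradient_image:
  fixes f :: "real^'n \<Rightarrow> real"
  assumes f: "convex_on UNIV f" and s: "\<forall>x. is_subgradient f x (s x)" and X: "bounded X"
  shows "bounded (s ` X)"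
proof -
  obtain R where R: "\<forall>x\<in>X. norm x \<le> R"
    using X by (auto simp: bounded_iff)
  have "continuous_on (cball 0 (R + 1)) f"
    by (rule continuous_on_subset[OF convex_on_continuous[OF open_UNIV f]]) simp
  then obtain B where B: "\<forall>y\<in>cball 0 (R + 1). \<bar>f y\<bar> \<le> B"
    using compact_imp_bounded[OF compact_continuous_image] by (force simp: bounded_iff)
  have "norm (s x) \<le> 2 * B" if x: "x \<in> X" for x
  proof (cases "s x = 0")
    case True
    have "\<bar>f x\<bar> \<le> B"
      using B R x by auto
    then show ?thesis
      using True by simp
  next
    case False
    define y where "y = x + (1 / norm (s x)) *\<^sub>R s x"
    have x_ball: "x \<in> cball 0 (R + 1)" and y_ball: "y \<in> cball 0 (R + 1)"
      using R[rule_format, OF x] False norm_triangle_ineq[of x "(1 / norm (s x)) *\<^sub>R s x"]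
      by (simp_all add: y_def)
    have "s x \<bullet> (y - x) = norm (s x)"
      using False by (simp add: y_def power2_norm_eq_inner[symmetric] power2_eq_square)
    moreover have "f y \<ge> f x + s x \<bullet> (y - x)"
      using s by (simp add: is_subgradient_def)
    ultimately show ?thesis
      using B[rule_format, OF x_ball] B[rule_format, OF y_ball] by linarith
  qed
  then show ?thesis
    by (auto simp: bounded_iff)
qed

lemma integral_norm_le_of_variance:
  fixes h :: "'d \<Rightarrow> 'b::euclidean_space"
  assumes D: "prob_space D" and h: "integrable D h"
    and var: "(\<integral>\<^sup>+\<xi>. ennreal ((norm (h \<xi> - c))\<^sup>2) \<partial>D) \<le> ennreal (\<nu>\<^sup>2)"
  shows "(\<integral>\<xi>. norm (h \<xi>) \<partial>D) \<le> norm c + (1 + \<nu>\<^sup>2) / 2"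
proof -
  interpret prob_space D by (rule D)
  have sq_meas: "(\<lambda>\<xi>. (norm (h \<xi> - c))\<^sup>2) \<in> borel_measurable D"
    using h by measurable
  have sq_int: "integrable D (\<lambda>\<xi>. (norm (h \<xi> - c))\<^sup>2)"
    using var sq_meas by (intro integrableI_bounded) (simp_all add: le_less_trans)
  have "ennreal (\<integral>\<xi>. (norm (h \<xi> - c))\<^sup>2 \<partial>D) \<le> ennreal (\<nu>\<^sup>2)"
    using var by (simp add: nn_integral_eq_integral[OF sq_int, symmetric])
  then have var_real: "(\<integral>\<xi>. (norm (h \<xi> - c))\<^sup>2 \<partial>D) \<le> \<nu>\<^sup>2"
    by (simp add: ennreal_le_iff)
  have pointwise: "norm (h \<xi>) \<le> norm c + (1 + (norm (h \<xi> - c))\<^sup>2) / 2" for \<xi>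
    using norm_triangle_sub[of "h \<xi>" c] sum_squares_bound[of 1 "norm (h \<xi> - c)"]
    by (simp add: power2_eq_square field_simps)
  have "(\<integral>\<xi>. norm (h \<xi>) \<partial>D) \<le> (\<integral>\<xi>. norm c + (1 + (norm (h \<xi> - c))\<^sup>2) / 2 \<partial>D)"
    using h sq_int pointwise by (intro integral_mono) auto
  also have "\<dots> = norm c + (1 + (\<integral>\<xi>. (norm (h \<xi> - c))\<^sup>2 \<partial>D)) / 2"
    using sq_int by (simp add: prob_space)
  also have "\<dots> \<le> norm c + (1 + \<nu>\<^sup>2) / 2"
    using var_real by simp
  finally show ?thesis .
qed

lemma bounded_integral_norm_combination:
  fixes g F :: "'x \<Rightarrow> 'd \<Rightarrow> 'b::euclidean_space"
  assumes D: "prob_space D" and r: "r \<ge> 0"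
    and g: "\<And>z. integrable D (g z)" "\<And>z. (\<integral>\<xi>. g z \<xi> \<partial>D) = gbar z"
    and F: "\<And>z. integrable D (F z)" "\<And>z. (\<integral>\<xi>. F z \<xi> \<partial>D) = Fbar z"
    and var_g: "\<And>z. (\<integral>\<^sup>+\<xi>. ennreal ((norm (g z \<xi> - gbar z))\<^sup>2) \<partial>D) \<le> ennreal (\<nu>\<^sub>g\<^sup>2)"
    and var_F: "\<And>z. (\<integral>\<^sup>+\<xi>. ennreal ((norm (F z \<xi> - Fbar z))\<^sup>2) \<partial>D) \<le> ennreal (\<nu>\<^sub>F\<^sup>2)"
    and bounded: "bounded (gbar ` X)" "bounded (Fbar ` X)"
  obtains C where "\<And>z. z \<in> X \<Longrightarrow>
    (\<integral>\<xi>. norm (g z \<xi> + r *\<^sub>R F z \<xi>) \<partial>D) + norm (gbar z + r *\<^sub>R Fbar z) \<le> C"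
proof -
  interpret prob_space D by (rule D)
  obtain B\<^sub>g B\<^sub>F where B: "\<And>z. z \<in> X \<Longrightarrow> norm (gbar z) \<le> B\<^sub>g" "\<And>z. z \<in> X \<Longrightarrow> norm (Fbar z) \<le> B\<^sub>F"
    using bounded by (auto simp: bounded_iff)
  have "(\<integral>\<xi>. norm (g z \<xi> + r *\<^sub>R F z \<xi>) \<partial>D) + norm (gbar z + r *\<^sub>R Fbar z)
      \<le> (2 * B\<^sub>g + (1 + \<nu>\<^sub>g\<^sup>2) / 2) + r * (2 * B\<^sub>F + (1 + \<nu>\<^sub>F\<^sup>2) / 2)" if z: "z \<in> X" for z
  proof -
    have "(\<integral>\<xi>. norm (g z \<xi> + r *\<^sub>R F z \<xi>) \<partial>D) \<le> (\<integral>\<xi>. norm (g z \<xi>) + r * norm (F z \<xi>) \<partial>D)"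
      using g F r by (intro integral_mono) (auto intro: norm_triangle_le)
    also have "\<dots> = (\<integral>\<xi>. norm (g z \<xi>) \<partial>D) + r * (\<integral>\<xi>. norm (F z \<xi>) \<partial>D)"
      using g F by simp
    also have "\<dots> \<le> (norm (gbar z) + (1 + \<nu>\<^sub>g\<^sup>2) / 2) + r * (norm (Fbar z) + (1 + \<nu>\<^sub>F\<^sup>2) / 2)"
      using integral_norm_le_of_variance[OF D g(1) var_g[unfolded g(2)[symmetric]]]
        integral_norm_le_of_variance[OF D F(1) var_F[unfolded F(2)[symmetric]]] g(2) F(2) r
      by (intro add_mono mult_left_mono) auto
    moreover have "norm (gbar z + r *\<^sub>R Fbar z) \<le> norm (gbar z) + r * norm (Fbar z)"
      using r norm_triangle_ineq[of "gbar z" "r *\<^sub>R Fbar z"] by simp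
    ultimately show ?thesis
      using B(1)[OF z] mult_left_mono[OF B(2)[OF z] r] by (simp add: distrib_left)
  qed
  then show ?thesis
    by (rule that)
qed

definition sample_events ::
  "'a measure \<Rightarrow> nat measure \<Rightarrow> 'd measure \<Rightarrow> (nat \<Rightarrow> 'a \<Rightarrow> nat) \<Rightarrow> (nat \<Rightarrow> 'a \<Rightarrow> 'd) \<Rightarrow>
   (nat \<Rightarrow> 'a \<Rightarrow> nat) \<Rightarrow> (nat \<Rightarrow> 'a \<Rightarrow> 'd) \<Rightarrow> nat \<times> sample_tag \<Rightarrow> 'a set set" where
  "sample_events M U D it xit ii xi = (\<lambda>(k, t). case t of
      Tilde_Index \<Rightarrow> rv_events M U (it k)
    | Tilde_Sample \<Rightarrow> rv_events M D (xit k)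
    | Index \<Rightarrow> rv_events M U (ii k)
    | Sample \<Rightarrow> rv_events M D (xi k))"

(* Everything drawn before (i_k, xi_k): all samples of the rounds j < k and the first-stage
   samples of round k.  These determine y_{k+1} and u_k. *)
definition history_sigma ::
  "'a measure \<Rightarrow> nat measure \<Rightarrow> 'd measure \<Rightarrow> (nat \<Rightarrow> 'a \<Rightarrow> nat) \<Rightarrow> (nat \<Rightarrow> 'a \<Rightarrow> 'd) \<Rightarrow>
   (nat \<Rightarrow> 'a \<Rightarrow> nat) \<Rightarrow> (nat \<Rightarrow> 'a \<Rightarrow> 'd) \<Rightarrow> nat \<Rightarrow> 'a measure" where
  "history_sigma M U D it xit ii xi k = sigma (space M)
     (\<Union>p \<in> {p. fst p < k} \<union> {(k, Tilde_Index), (k, Tilde_Sample)}. sample_events M U D it xit ii xi p)"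

lemma Int_stable_sample_events: "Int_stable (sample_events M U D it xit ii xi p)"
  by (cases p; cases "snd p") (simp_all add: sample_events_def Int_stable_rv_events)

lemma measurable_sigma_sample_events:
  assumes "p \<in> I" and "sample_events M U D it xit ii xi p = rv_events M S f" and "f \<in> measurable M S"
  shows "f \<in> measurable (sigma (space M) (\<Union>p\<in>I. sample_events M U D it xit ii xi p)) S"
proof (rule measurable_sigma_rv_events[OF assms(3)])
  show "rv_events M S f \<subseteq> (\<Union>p\<in>I. sample_events M U D it xit ii xi p)"
    using assms(1,2) by blast
  show "(\<Union>p\<in>I. sample_events M U D it xit ii xi p) \<subseteq> Pow (space M)"
    by (auto simp: sample_events_def rv_events_def split: sample_tag.splits)
qed

lemma measurable_history_sigma:
  assumes "\<forall>j. it j \<in> measurable M U \<and> xit j \<in> measurable M D \<and> ii j \<in> measurable M U \<and> xi j \<in> measurable M D"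
  shows "j \<le> k \<Longrightarrow> it j \<in> measurable (history_sigma M U D it xit ii xi k) U"
    and "j \<le> k \<Longrightarrow> xit j \<in> measurable (history_sigma M U D it xit ii xi k) D"
    and "j < k \<Longrightarrow> ii j \<in> measurable (history_sigma M U D it xit ii xi k) U"
    and "j < k \<Longrightarrow> xi j \<in> measurable (history_sigma M U D it xit ii xi k) D"
proof -
  show "j \<le> k \<Longrightarrow> it j \<in> measurable (history_sigma M U D it xit ii xi k) U"
    unfolding history_sigma_def
    by (rule measurable_sigma_sample_events[of "(j, Tilde_Index)"]) (use assms in \<open>auto simp: sample_events_def\<close>)
  show "j \<le> k \<Longrightarrow> xit j \<in> measurable (history_sigma M U D it xit ii xi k) D"
    unfolding history_sigma_def
    by (rule measurable_sigma_sample_events[of "(j, Tilde_Sample)"]) (use assms in \<open>auto simp: sample_events_def\<close>)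
  show "j < k \<Longrightarrow> ii j \<in> measurable (history_sigma M U D it xit ii xi k) U"
    unfolding history_sigma_def
    by (rule measurable_sigma_sample_events[of "(j, Index)"]) (use assms in \<open>auto simp: sample_events_def\<close>)
  show "j < k \<Longrightarrow> xi j \<in> measurable (history_sigma M U D it xit ii xi k) D"
    unfolding history_sigma_def
    by (rule measurable_sigma_sample_events[of "(j, Sample)"]) (use assms in \<open>auto simp: sample_events_def\<close>)
qed

lemma (in prob_space) distr_history_current_sample:
  assumes indep: "indep_sets (sample_events M U D it xit ii xi) UNIV"
    and ii: "ii k \<in> measurable M U" "distr M U (ii k) = U"
    and xi: "xi k \<in> measurable M D" "distr M D (xi k) = D"
    and Z: "Z \<in> measurable (history_sigma M U D it xit ii xi k) S"
  shows "random_variable S Z"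
    and "distr M (S \<Otimes>\<^sub>M (U \<Otimes>\<^sub>M D)) (\<lambda>\<omega>. (Z \<omega>, (ii k \<omega>, xi k \<omega>))) = distr M S Z \<Otimes>\<^sub>M (U \<Otimes>\<^sub>M D)"
proof -
  note indep_pair = indep_sets_distr_Pair[OF indep Int_stable_sample_events]
  let ?E = "sample_events M U D it xit ii xi"
  have ii_k: "ii k \<in> measurable (sigma (space M) (\<Union>p\<in>I. ?E p)) U" if "(k, Index) \<in> I" for I
    by (rule measurable_sigma_sample_events[OF that]) (simp_all add: sample_events_def ii)
  have xi_k: "xi k \<in> measurable (sigma (space M) (\<Union>p\<in>I. ?E p)) D" if "(k, Sample) \<in> I" for I
    by (rule measurable_sigma_sample_events[OF that]) (simp_all add: sample_events_def xi)
  have W: "(\<lambda>\<omega>. (ii k \<omega>, xi k \<omega>)) \<in> measurable (sigma (space M) (\<Union>p\<in>{(k, Index), (k, Sample)}. ?E p)) (U \<Otimes>\<^sub>M D)"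
    by (intro measurable_Pair ii_k xi_k) simp_all
  have "distr M (U \<Otimes>\<^sub>M D) (\<lambda>\<omega>. (ii k \<omega>, xi k \<omega>)) = U \<Otimes>\<^sub>M D"
    using indep_pair(3)[OF _ ii_k[of "{(k, Index)}"] xi_k[of "{(k, Sample)}"]] ii xi by simp
  moreover have "({p. fst p < k} \<union> {(k, Tilde_Index), (k, Tilde_Sample)}) \<inter> {(k, Index), (k, Sample)} = {}"
    by auto
  ultimately show "random_variable S Z"
    and "distr M (S \<Otimes>\<^sub>M (U \<Otimes>\<^sub>M D)) (\<lambda>\<omega>. (Z \<omega>, (ii k \<omega>, xi k \<omega>))) = distr M S Z \<Otimes>\<^sub>M (U \<Otimes>\<^sub>M D)"
    using indep_pair[OF _ Z[unfolded history_sigma_def] W] by simp_all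
qed

lemma borel_measurable_history_iterates:
  fixes h :: "nat \<Rightarrow> real^'n \<Rightarrow> 'd \<Rightarrow> real^'n" and blk :: "'n \<Rightarrow> nat"
    and \<gamma> :: "nat \<Rightarrow> real" and x0 y0 :: "real^'n"
  assumes samples: "\<forall>j. it j \<in> measurable M (uniform_count_measure {..<N}) \<and> xit j \<in> measurable M D \<and>
                       ii j \<in> measurable M (uniform_count_measure {..<N}) \<and> xi j \<in> measurable M D"
    and Xb: "\<forall>i<N. convex (Xb i) \<and> closed (Xb i) \<and> Xb i \<noteq> {}"
    and h: "\<And>j. (\<lambda>p. h j (fst p) (snd p)) \<in> borel_measurable (borel \<Otimes>\<^sub>M D)"
    and hbar: "\<And>j. hbar j \<in> borel_measurable borel"
    and X: "convex X" "closed X" "X \<noteq> {}"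
  defines "y \<equiv> \<lambda>k \<omega>. snd (alg_iter blk Xb \<gamma> h x0 y0 it xit ii xi k \<omega>)"
  shows "y (Suc k) \<in> borel_measurable (history_sigma M (uniform_count_measure {..<N}) D it xit ii xi k)"
    and "aux_seq X N \<gamma> x0 (\<lambda>j \<omega>. block_sampling_error N blk (h j) (hbar j) (y (Suc j) \<omega>) (ii j \<omega>) (xi j \<omega>)) k
      \<in> borel_measurable (history_sigma M (uniform_count_measure {..<N}) D it xit ii xi k)"
proof -
  note history = measurable_history_sigma[OF samples]
  have y_history: "y (Suc j) \<in> borel_measurable (history_sigma M (uniform_count_measure {..<N}) D it xit ii xi k)"
    if "j \<le> k" for j
    unfolding y_def using that Xb h history by (intro borel_measurable_alg_iter_snd[where N=N]) auto
  then show "y (Suc k) \<in> borel_measurable (history_sigma M (uniform_count_measure {..<N}) D it xit ii xi k)"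
    by simp
  show "aux_seq X N \<gamma> x0 (\<lambda>j \<omega>. block_sampling_error N blk (h j) (hbar j) (y (Suc j) \<omega>) (ii j \<omega>) (xi j \<omega>)) k
      \<in> borel_measurable (history_sigma M (uniform_count_measure {..<N}) D it xit ii xi k)"
    using X history
    by (intro borel_measurable_aux_seq allI impI borel_measurable_block_sampling_error[OF h hbar] y_history) auto
qed

lemma (in prob_space) block_sampling_error_inner_mean_zero:
  fixes h :: "real^'n \<Rightarrow> 'd \<Rightarrow> real^'n" and Y V :: "'a \<Rightarrow> real^'n"
  assumes blk: "\<forall>j. blk j < N" and N: "N > 0" and D: "prob_space D"
    and h_meas: "(\<lambda>p. h (fst p) (snd p)) \<in> borel_measurable (borel \<Otimes>\<^sub>M D)"
    and hbar_meas: "hbar \<in> borel_measurable borel"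
    and h_int: "\<And>z. integrable D (h z)" and h_mean: "\<And>z. (\<integral>\<xi>. h z \<xi> \<partial>D) = hbar z"
    and X: "bounded X" "X \<in> sets borel"
    and h_bound: "\<And>z. z \<in> X \<Longrightarrow> (\<integral>\<xi>. norm (h z \<xi>) \<partial>D) + norm (hbar z) \<le> C"
    and YV: "random_variable (borel \<Otimes>\<^sub>M borel) (\<lambda>\<omega>. (Y \<omega>, V \<omega>))"
    and YV_in: "\<And>\<omega>. \<omega> \<in> space M \<Longrightarrow> Y \<omega> \<in> X \<and> V \<omega> \<in> X"
    and I\<xi>: "random_variable (uniform_count_measure {..<N} \<Otimes>\<^sub>M D) (\<lambda>\<omega>. (I \<omega>, \<xi> \<omega>))"
    and joint: "distr M ((borel \<Otimes>\<^sub>M borel) \<Otimes>\<^sub>M (uniform_count_measure {..<N} \<Otimes>\<^sub>M D))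
        (\<lambda>\<omega>. ((Y \<omega>, V \<omega>), (I \<omega>, \<xi> \<omega>)))
      = distr M (borel \<Otimes>\<^sub>M borel) (\<lambda>\<omega>. (Y \<omega>, V \<omega>)) \<Otimes>\<^sub>M (uniform_count_measure {..<N} \<Otimes>\<^sub>M D)"
  shows "integrable M (\<lambda>\<omega>. block_sampling_error N blk h hbar (Y \<omega>) (I \<omega>) (\<xi> \<omega>) \<bullet> (V \<omega> - Y \<omega>))"
    and "(\<integral>\<omega>. block_sampling_error N blk h hbar (Y \<omega>) (I \<omega>) (\<xi> \<omega>) \<bullet> (V \<omega> - Y \<omega>) \<partial>M) = 0"
proof -
  let ?U = "uniform_count_measure {..<N}"
  define H where "H p = block_sampling_error N blk h hbar (fst (fst p)) (fst (snd p)) (snd (snd p))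
    \<bullet> (snd (fst p) - fst (fst p))" for p :: "((real^'n) \<times> (real^'n)) \<times> (nat \<times> 'd)"
  interpret D: prob_space D by (rule D)
  have UD: "prob_space (?U \<Otimes>\<^sub>M D)"
    using N by (intro prob_space_pair prob_space_uniform_count_measure D) auto
  have H_meas: "H \<in> borel_measurable ((borel \<Otimes>\<^sub>M borel) \<Otimes>\<^sub>M (?U \<Otimes>\<^sub>M D))"
    unfolding H_def
    by (intro borel_measurable_inner borel_measurable_diff borel_measurable_block_sampling_error[OF h_meas hbar_meas])
      measurable
  have section_int: "integrable D (\<lambda>\<xi>. H ((y, v), (i, \<xi>)))"
    and section_integral: "(\<integral>\<xi>. H ((y, v), (i, \<xi>)) \<partial>D) = (real N *\<^sub>R blockpart blk i (hbar y) - hbar y) \<bullet> (v - y)"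
    for y v i
    using integrable_block_sampling_error[where h=h and hbar=hbar, OF D h_int h_mean]
      integral_block_sampling_error[where h=h and hbar=hbar, OF D h_int h_mean]
    by (simp_all add: H_def)
  have nonempty: "{..<N} \<noteq> {}"
    using N by auto
  have section_zero: "(\<integral>w. H (z, w) \<partial>(?U \<Otimes>\<^sub>M D)) = 0" for z
    using integral_uniform_count_pair[OF _ nonempty D section_int]
    by (cases z) (simp add: section_integral inner_sum_left[symmetric] sum_scaled_blockpart_diff[OF blk])
  have section_bound: "(\<integral>w. norm (H (z, w)) \<partial>(?U \<Otimes>\<^sub>M D)) \<le> real N * C * diameter X"
    if "z \<in> X \<times> X" for z
  proof -
    obtain y v where z: "z = (y, v)" and y: "y \<in> X" and v: "v \<in> X"
      using \<open>z \<in> X \<times> X\<close> by (cases z) auto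
    have "0 \<le> (\<integral>\<xi>. norm (h y \<xi>) \<partial>D)"
      by (simp add: integral_nonneg_AE)
    then have C: "0 \<le> C"
      using h_bound[OF y] norm_ge_zero[of "hbar y"] by linarith
    have "(\<integral>\<xi>. norm (H ((y, v), (i, \<xi>))) \<partial>D) \<le> real N * C * diameter X" for i
    proof -
      have "(\<integral>\<xi>. norm (H ((y, v), (i, \<xi>))) \<partial>D)
          \<le> real N * ((\<integral>\<xi>. norm (h y \<xi>) \<partial>D) + norm (hbar y)) * norm (v - y)"
        unfolding H_def
        using integral_norm_inner_block_sampling_error_le[where h=h and hbar=hbar, OF D h_int h_mean N] by simp
      also have "\<dots> \<le> real N * C * diameter X"
        using h_bound[OF y] diameter_bounded_bound[OF X(1) v y] C
        by (intro mult_mono) (auto simp: dist_norm)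
      finally show ?thesis .
    qed
    then have "(\<Sum>i<N. \<integral>\<xi>. norm (H ((y, v), (i, \<xi>))) \<partial>D) / real N \<le> real N * C * diameter X"
      using sum_bounded_above[of "{..<N}" "\<lambda>i. \<integral>\<xi>. norm (H ((y, v), (i, \<xi>))) \<partial>D" "real N * C * diameter X"] N
      by (simp add: pos_divide_le_eq mult.commute)
    then show ?thesis
      using integral_uniform_count_pair[OF _ nonempty D integrable_norm[OF section_int]] by (simp add: z)
  qed
  have XX: "X \<times> X \<in> sets (borel \<Otimes>\<^sub>M borel)"
    using X(2) by (simp add: borel_prod borel_Times)
  have int: "integrable M (\<lambda>\<omega>. H ((Y \<omega>, V \<omega>), (I \<omega>, \<xi> \<omega>)))"
    by (rule integrable_indep_section_bound[OF YV I\<xi> UD joint H_meas XX])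
      (use YV_in section_bound in \<open>auto intro: integrable_uniform_count_pair[OF _ nonempty D section_int]\<close>)
  moreover have "(\<integral>\<omega>. H ((Y \<omega>, V \<omega>), (I \<omega>, \<xi> \<omega>)) \<partial>M) = 0"
    by (rule integral_indep_eq_zero[OF YV I\<xi> UD joint H_meas int section_zero])
  ultimately show "integrable M (\<lambda>\<omega>. block_sampling_error N blk h hbar (Y \<omega>) (I \<omega>) (\<xi> \<omega>) \<bullet> (V \<omega> - Y \<omega>))"
    and "(\<integral>\<omega>. block_sampling_error N blk h hbar (Y \<omega>) (I \<omega>) (\<xi> \<omega>) \<bullet> (V \<omega> - Y \<omega>) \<partial>M) = 0"
    by (simp_all add: H_def)
qed

lemma (in prob_space) block_coordinate_error_mean_zero:
  fixes h :: "nat \<Rightarrow> real^'n \<Rightarrow> 'd \<Rightarrow> real^'n" and blk :: "'n \<Rightarrow> nat"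
    and \<gamma> :: "nat \<Rightarrow> real" and x0 y0 :: "real^'n"
  assumes blk: "\<forall>j. blk j < N" and D: "prob_space D"
    and Xb: "\<forall>i<N. convex (Xb i) \<and> closed (Xb i) \<and> Xb i \<subseteq> block_subspace blk i"
    and X: "X = prod_set blk N Xb" "compact X" "convex X"
    and x0: "x0 \<in> X" and y0: "y0 \<in> X"
    and samples: "\<forall>j. it j \<in> measurable M (uniform_count_measure {..<N}) \<and> xit j \<in> measurable M D \<and>
                       ii j \<in> measurable M (uniform_count_measure {..<N}) \<and> xi j \<in> measurable M D"
    and distr_ii: "distr M (uniform_count_measure {..<N}) (ii k) = uniform_count_measure {..<N}"
    and distr_xi: "distr M D (xi k) = D"
    and indep: "indep_sets (sample_events M (uniform_count_measure {..<N}) D it xit ii xi) UNIV"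
    and h_meas: "\<And>j. (\<lambda>p. h j (fst p) (snd p)) \<in> borel_measurable (borel \<Otimes>\<^sub>M D)"
    and hbar_meas: "\<And>j. hbar j \<in> borel_measurable borel"
    and h_int: "\<And>z. integrable D (h k z)" and h_mean: "\<And>z. (\<integral>\<xi>. h k z \<xi> \<partial>D) = hbar k z"
    and h_bound: "\<And>z. z \<in> X \<Longrightarrow> (\<integral>\<xi>. norm (h k z \<xi>) \<partial>D) + norm (hbar k z) \<le> C"
  defines "y \<equiv> \<lambda>k \<omega>. snd (alg_iter blk Xb \<gamma> h x0 y0 it xit ii xi k \<omega>)"
    and "e \<equiv> \<lambda>j \<omega>. block_sampling_error N blk (h j) (hbar j)
      (snd (alg_iter blk Xb \<gamma> h x0 y0 it xit ii xi (Suc j) \<omega>)) (ii j \<omega>) (xi j \<omega>)"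
  shows "integrable M (\<lambda>\<omega>. e k \<omega> \<bullet> (aux_seq X N \<gamma> x0 e k \<omega> - y (Suc k) \<omega>))"
    and "(\<integral>\<omega>. e k \<omega> \<bullet> (aux_seq X N \<gamma> x0 e k \<omega> - y (Suc k) \<omega>) \<partial>M) = 0"
proof -
  let ?U = "uniform_count_measure {..<N}"
  have N: "N > 0"
    using blk by (metis gr_zeroI less_nat_zero_code)
  have X_ne: "X \<noteq> {}" and X_closed: "closed X"
    using x0 X(2) by (auto intro: compact_imp_closed)
  then have "\<forall>i<N. Xb i \<noteq> {}"
    by (auto simp: X(1) prod_set_def)
  then have Xb_closed: "\<forall>i<N. convex (Xb i) \<and> closed (Xb i) \<and> Xb i \<noteq> {}"
    and Xb_block: "\<forall>i<N. Xb i \<subseteq> block_subspace blk i \<and> closed (Xb i) \<and> Xb i \<noteq> {}"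
    using Xb by blast+
  have history: "(\<lambda>\<omega>. (y (Suc k) \<omega>, aux_seq X N \<gamma> x0 e k \<omega>))
      \<in> measurable (history_sigma M ?U D it xit ii xi k) (borel \<Otimes>\<^sub>M borel)"
    unfolding e_def y_def
    using borel_measurable_history_iterates[where h=h and hbar=hbar and blk=blk and \<gamma>=\<gamma> and ?x0.0=x0 and ?y0.0=y0,
        OF samples Xb_closed h_meas hbar_meas X(3) X_closed X_ne]
    by (intro measurable_Pair) simp_all
  have ii_k: "ii k \<in> measurable M ?U" and xi_k: "xi k \<in> measurable M D"
    using samples by auto
  note joint = distr_history_current_sample[OF indep ii_k distr_ii xi_k distr_xi history]
  have in_X: "y (Suc k) \<omega> \<in> X \<and> aux_seq X N \<gamma> x0 e k \<omega> \<in> X" if "\<omega> \<in> space M" for \<omega>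
  proof
    have "\<forall>j. it j \<omega> < N \<and> ii j \<omega> < N"
      using measurable_space[OF samples[rule_format, THEN conjunct1] that]
        measurable_space[OF samples[rule_format, THEN conjunct2, THEN conjunct2, THEN conjunct1] that]
      by (simp add: space_uniform_count_measure)
    then show "y (Suc k) \<omega> \<in> X"
      unfolding y_def X(1) using x0 y0 Xb_block X(1)
      by (intro conjunct2[OF alg_iter_in_prod_set]) simp_all
    show "aux_seq X N \<gamma> x0 e k \<omega> \<in> X"
      by (rule aux_seq_in_set[OF x0 X_closed X_ne])
  qed
  have e_k: "e k = (\<lambda>\<omega>. block_sampling_error N blk (h k) (hbar k) (y (Suc k) \<omega>) (ii k \<omega>) (xi k \<omega>))"
    unfolding e_def y_def ..
  have "(\<lambda>\<omega>. (ii k \<omega>, xi k \<omega>)) \<in> measurable M (?U \<Otimes>\<^sub>M D)"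
    using ii_k xi_k by (rule measurable_Pair)
  from block_sampling_error_inner_mean_zero[OF blk N D h_meas hbar_meas h_int h_mean
      compact_imp_bounded[OF X(2)] borel_closed[OF X_closed] h_bound joint(1) in_X this joint(2)]
  show "integrable M (\<lambda>\<omega>. e k \<omega> \<bullet> (aux_seq X N \<gamma> x0 e k \<omega> - y (Suc k) \<omega>))"
    and "(\<integral>\<omega>. e k \<omega> \<bullet> (aux_seq X N \<gamma> x0 e k \<omega> - y (Suc k) \<omega>) \<partial>M) = 0"
    by (simp_all only: e_k)
qed

theorem lemma7:
  fixes M :: "'a measure" and D :: "(real^('m::finite)) measure"
    and N :: nat and blk :: "('n::finite) \<Rightarrow> nat" and Xb :: "nat \<Rightarrow> (real^'n) set" and X :: "(real^'n) set"
    and F :: "real^'n \<Rightarrow> real^'m \<Rightarrow> real^'n" and f :: "real^'n \<Rightarrow> real^'m \<Rightarrow> real"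
    and g :: "real^'n \<Rightarrow> real^'m \<Rightarrow> real^'n"
    and Fbar :: "real^'n \<Rightarrow> real^'n" and fbar :: "real^'n \<Rightarrow> real" and sg :: "real^'n \<Rightarrow> real^'n"
    and \<gamma> \<rho> :: "nat \<Rightarrow> real" and x0 y0 :: "real^'n"
    and it ii :: "nat \<Rightarrow> 'a \<Rightarrow> nat" and xit xi :: "nat \<Rightarrow> 'a \<Rightarrow> real^'m"
    and \<nu>F \<nu>f :: real and k :: nat
    and y u w_F w_f e_F e_f err :: "nat \<Rightarrow> 'a \<Rightarrow> real^'n"
  assumes M: "prob_space M"
    and D_sets: "sets D = sets borel"
    \<comment> \<open>block structure: N blocks, each nonempty (n_i \<ge> 1)\<close>
    and blk_range: "\<forall>j. blk j < N"
    and blk_nonempty: "\<forall>i<N. \<exists>j. blk j = i"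
    \<comment> \<open>X_i closed convex, living in the i-th block; X = prod X_i nonempty compact convex\<close>
    and Xb_sub: "\<forall>i<N. Xb i \<subseteq> block_subspace blk i"
    and Xb_closed: "\<forall>i<N. closed (Xb i)"
    and Xb_convex: "\<forall>i<N. convex (Xb i)"
    and X_def: "X = prod_set blk N Xb"
    and X_ne: "X \<noteq> {}" and X_compact: "compact X" and X_convex: "convex X"
    \<comment> \<open>expected maps and (stochastic) subgradients\<close>
    and meas_F: "(\<lambda>p. F (fst p) (snd p)) \<in> borel_measurable (borel \<Otimes>\<^sub>M D)"
    and meas_g: "(\<lambda>p. g (fst p) (snd p)) \<in> borel_measurable (borel \<Otimes>\<^sub>M D)"
    and f_int: "\<forall>x. integrable D (f x)"
    and fbar_def: "\<forall>x. fbar x = (\<integral>\<xi>. f x \<xi> \<partial>D)"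
    and F_int: "\<forall>x. integrable D (F x)"
    and Fbar_def: "\<forall>x. Fbar x = (\<integral>\<xi>. F x \<xi> \<partial>D)"
    and g_int: "\<forall>x. integrable D (g x)"
    and g_unbiased: "\<forall>x. (\<integral>\<xi>. g x \<xi> \<partial>D) = sg x"
    and sg_subgrad: "\<forall>x. is_subgradient fbar x (sg x)"
    \<comment> \<open>problem assumption\<close>
    and Fbar_cont: "continuous_on UNIV Fbar"
    and Fbar_mono: "\<forall>x y. (Fbar x - Fbar y) \<bullet> (x - y) \<ge> 0"
    and fbar_convex: "convex_on UNIV fbar"
    \<comment> \<open>algorithm data\<close>
    and x0X: "x0 \<in> X" and y0X: "y0 \<in> X"
    and \<gamma>_pos: "\<forall>k. \<gamma> k > 0" and \<rho>_pos: "\<forall>k. \<rho> k > 0"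
    \<comment> \<open>random-sample assumption (a): distributions and mutual independence\<close>
    and it_rv: "\<forall>k. it k \<in> measurable M (uniform_count_measure {..<N}) \<and>
                   distr M (uniform_count_measure {..<N}) (it k) = uniform_count_measure {..<N}"
    and ii_rv: "\<forall>k. ii k \<in> measurable M (uniform_count_measure {..<N}) \<and>
                   distr M (uniform_count_measure {..<N}) (ii k) = uniform_count_measure {..<N}"
    and xit_rv: "\<forall>k. xit k \<in> measurable M D \<and> distr M D (xit k) = D"
    and xi_rv: "\<forall>k. xi k \<in> measurable M D \<and> distr M D (xi k) = D"
    and indep: "prob_space.indep_sets M
        (\<lambda>(k, t). case t of
            Tilde_Index \<Rightarrow> rv_events M (uniform_count_measure {..<N}) (it k)
          | Tilde_Sample \<Rightarrow> rv_events M D (xit k)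
          | Index \<Rightarrow> rv_events M (uniform_count_measure {..<N}) (ii k)
          | Sample \<Rightarrow> rv_events M D (xi k)) UNIV"
    \<comment> \<open>random-sample assumption (c): bounded variances\<close>
    and \<nu>F_pos: "\<nu>F > 0" and \<nu>f_pos: "\<nu>f > 0"
    and var_F: "\<forall>x. (\<integral>\<^sup>+\<xi>. ennreal ((norm (F x \<xi> - Fbar x))\<^sup>2) \<partial>D) \<le> ennreal (\<nu>F\<^sup>2)"
    and var_g: "\<forall>x. (\<integral>\<^sup>+\<xi>. ennreal ((norm (g x \<xi> - sg x))\<^sup>2) \<partial>D) \<le> ennreal (\<nu>f\<^sup>2)"
    and y_def: "y = (\<lambda>k \<omega>. snd (alg_iter blk Xb \<gamma> (\<lambda>k z \<xi>. g z \<xi> + \<rho> k *\<^sub>R F z \<xi>)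
                                x0 y0 it xit ii xi k \<omega>))"
    and w_F_def: "w_F = (\<lambda>k \<omega>. F (y (Suc k) \<omega>) (xi k \<omega>) - Fbar (y (Suc k) \<omega>))"
    and w_f_def: "w_f = (\<lambda>k \<omega>. g (y (Suc k) \<omega>) (xi k \<omega>) - sg (y (Suc k) \<omega>))"
    and e_F_def: "e_F = (\<lambda>k \<omega>. real N *\<^sub>R blockpart blk (ii k \<omega>) (F (y (Suc k) \<omega>) (xi k \<omega>))
                      - F (y (Suc k) \<omega>) (xi k \<omega>))"
    and e_f_def: "e_f = (\<lambda>k \<omega>. real N *\<^sub>R blockpart blk (ii k \<omega>) (g (y (Suc k) \<omega>) (xi k \<omega>))
                      - g (y (Suc k) \<omega>) (xi k \<omega>))"
    and err_def: "err = (\<lambda>k \<omega>. w_f k \<omega> + e_f k \<omega> + \<rho> k *\<^sub>R w_F k \<omega> + \<rho> k *\<^sub>R e_F k \<omega>)"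
    and u_def: "u = aux_seq X N \<gamma> x0 err"
  shows "integrable M (\<lambda>\<omega>. err k \<omega> \<bullet> (u k \<omega> - y (Suc k) \<omega>)) \<and>
         (\<integral>\<omega>. err k \<omega> \<bullet> (u k \<omega> - y (Suc k) \<omega>) \<partial>M) = 0"
proof -
  interpret prob_space M by (rule M)
  define h where "h j z \<xi> = g z \<xi> + \<rho> j *\<^sub>R F z \<xi>" for j z \<xi>
  define hbar where "hbar j z = sg z + \<rho> j *\<^sub>R Fbar z" for j z
  have D: "prob_space D"
    using xi_rv prob_space_distr[of "xi 0" D] by auto
  interpret D: prob_space D by (rule D)
  have y_alg: "y = (\<lambda>k \<omega>. snd (alg_iter blk Xb \<gamma> h x0 y0 it xit ii xi k \<omega>))"
    unfolding y_def h_def ..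
  have err_eq: "err = (\<lambda>j \<omega>. block_sampling_error N blk (h j) (hbar j) (y (Suc j) \<omega>) (ii j \<omega>) (xi j \<omega>))"
    unfolding err_def w_f_def e_f_def w_F_def e_F_def block_sampling_error_def h_def hbar_def
    by (simp add: fun_eq_iff linear_add[OF linear_blockpart] linear_scale[OF linear_blockpart] algebra_simps)
  have "(\<lambda>z. \<integral>\<xi>. g z \<xi> \<partial>D) \<in> borel_measurable borel"
    using meas_g by (intro D.borel_measurable_lebesgue_integral) (simp add: split_beta')
  then have sg_meas: "sg \<in> borel_measurable borel"
    using g_unbiased by simp
  have h_meas: "(\<lambda>p. h j (fst p) (snd p)) \<in> borel_measurable (borel \<Otimes>\<^sub>M D)" for j
    unfolding h_def using meas_g meas_F by (intro borel_measurable_add borel_measurable_scaleR) simp_all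
  have hbar_meas: "hbar j \<in> borel_measurable borel" for j
    unfolding hbar_def using sg_meas borel_measurable_continuous_onI[OF Fbar_cont]
    by (intro borel_measurable_add borel_measurable_scaleR) simp_all
  have h_int: "integrable D (h j z)" and h_mean: "(\<integral>\<xi>. h j z \<xi> \<partial>D) = hbar j z" for j z
    using g_int F_int g_unbiased Fbar_def by (simp_all add: h_def[abs_def] hbar_def)
  have "bounded (sg ` X)"
    using fbar_convex sg_subgrad compact_imp_bounded[OF X_compact] by (rule bounded_subgradient_image)
  moreover have "bounded (Fbar ` X)"
    by (intro compact_imp_bounded compact_continuous_image continuous_on_subset[OF Fbar_cont] X_compact) simp
  ultimately obtain C where C: "\<And>z. z \<in> X \<Longrightarrow> (\<integral>\<xi>. norm (h k z \<xi>) \<partial>D) + norm (hbar k z) \<le> C"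
    unfolding h_def hbar_def
    by (rule bounded_integral_norm_combination[OF D less_imp_le[OF \<rho>_pos[rule_format, of k]] g_int[rule_format]
          g_unbiased[rule_format] F_int[rule_format] Fbar_def[rule_format, symmetric]
          var_g[rule_format] var_F[rule_format]]) blast
  have indep_samples: "indep_sets (sample_events M (uniform_count_measure {..<N}) D it xit ii xi) UNIV"
    unfolding sample_events_def using indep .
  have Xb: "\<forall>i<N. convex (Xb i) \<and> closed (Xb i) \<and> Xb i \<subseteq> block_subspace blk i"
    using Xb_convex Xb_closed Xb_sub by blast
  have samples: "\<forall>j. it j \<in> measurable M (uniform_count_measure {..<N}) \<and> xit j \<in> measurable M D \<and>
      ii j \<in> measurable M (uniform_count_measure {..<N}) \<and> xi j \<in> measurable M D"
    using it_rv xit_rv ii_rv xi_rv by simp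
  note mean_zero = block_coordinate_error_mean_zero[where h=h and hbar=hbar and k=k and \<gamma>=\<gamma> and ?x0.0=x0 and ?y0.0=y0,
      OF blk_range D Xb X_def X_compact X_convex x0X y0X samples
      ii_rv[rule_format, THEN conjunct2] xi_rv[rule_format, THEN conjunct2] indep_samples
      h_meas hbar_meas h_int h_mean C]
  show ?thesis
    unfolding u_def err_eq y_alg using mean_zero by simp
qed

end
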